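(* Let $A=(0,0)$ and $B=(b_1,b_2)$ with $b_1>0$ and $0\le b_2\le b_1-1$, and let $s=b_2/b_1$ and $Q=(1-s)(1,0)+s(3/2,1/2)$. For $k\in(0,1)$ let $P_k=(1-k)(1,1)+kQ$ and $\gamma_k(t)=Bt^3+3P_kt^2(1-t)+3P_kt(1-t)^2$, $0\le t\le1$. If $k_1>k_2$ are in $(0,1)$, then the curves $\gamma_1=\gamma_{k_1}$ and $\gamma_2=\gamma_{k_2}$ do not intersect except at their common endpoints $A$ and $B$, and, except at the endpoints, $\gamma_2$ lies above $\gamma_1$.
   Context: Each $\gamma_k$ is the cubic B\'ezier curve with endpoints $A=\gamma_k(0)$, $B=\gamma_k(1)$ and both inner control points equal to $P_k$. *)

theory Defs
  imports "HOL-Analysis.Analysis"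
begin

definition Qpt :: "real \<times> real \<Rightarrow> real \<times> real" where
  "Qpt B = (let s = snd B / fst B in (1 - s) *\<^sub>R (1, 0) + s *\<^sub>R (3/2, 1/2))"

definition Ppt :: "real \<times> real \<Rightarrow> real \<Rightarrow> real \<times> real" where
  "Ppt B k = (1 - k) *\<^sub>R (1, 1) + k *\<^sub>R Qpt B"

definition gam :: "real \<times> real \<Rightarrow> real \<Rightarrow> real \<Rightarrow> real \<times> real" where
  "gam B k t = t ^ 3 *\<^sub>R B + (3 * t ^ 2 * (1 - t)) *\<^sub>R Ppt B k
                + (3 * t * (1 - t) ^ 2) *\<^sub>R Ppt B k"

end

theory Submission
  imports Defs
begin

text \<open>With \<open>c = b\<^sub>2 / (2 b\<^sub>1)\<close> the point \<open>Q\<close> is \<open>(1 + c, c)\<close>, so every control point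
  \<open>P\<^sub>k = (1 + k c, 1 - k + k c)\<close> lies on the line \<open>(1 - c) x + c y = 1\<close> through \<open>(1, 1)\<close>
  and \<open>Q\<close>. Hence the linear functional \<open>L(x, y) = (1 - c) x + c y\<close> takes the value
  \<open>L(B) t\<^sup>3 + 3 t (1 - t)\<close> at \<open>\<gamma>\<^sub>k(t)\<close>, independently of \<open>k\<close>, and this cubic is strictly
  increasing on \<open>[0, 1]\<close> because \<open>L(B) \<ge> 1\<close>. So a common point of two curves has the
  same parameter on both, where they differ by \<open>3 t (1 - t) (k\<^sub>1 - k\<^sub>2) (c, c - 1)\<close>.
  If instead only the abscissae agree, then \<open>t\<^sub>1 \<le> t\<^sub>2\<close>, as the abscissa increases both
  in \<open>t\<close> and in \<open>k\<close>; comparing \<open>L\<close>-values then puts \<open>\<gamma>\<^sub>2(t\<^sub>2)\<close> above \<open>\<gamma>\<^sub>1(t\<^sub>1)\<close>.\<close>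

lemma strict_mono_on_cubic:
  fixes a m :: real
  assumes "0 < a" and "a \<le> m"
  shows "strict_mono_on {0..1} (\<lambda>t. m * t ^ 3 + 3 * a * t * (1 - t))"
proof (rule strict_mono_onI)
  fix t r :: real
  assume "t \<in> {0..1}" "r \<in> {0..1}" "t < r"
  then have "t < 1" "0 \<le> t" "0 \<le> r" by auto
  have "(r - 1) ^ 2 + (r - 1) * (t - 1) + (t - 1) ^ 2 = (r - 1 + (t - 1) / 2) ^ 2 + 3 / 4 * (t - 1) ^ 2"
    by (simp add: power2_eq_square field_simps)
  moreover have "0 < (t - 1) ^ 2" using \<open>t < 1\<close> by simp
  ultimately have pos: "0 < (r - 1) ^ 2 + (r - 1) * (t - 1) + (t - 1) ^ 2"
    using zero_le_power2[of "r - 1 + (t - 1) / 2"] by linarith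
  have "a * (r\<^sup>2 + r * t + t\<^sup>2) \<le> m * (r\<^sup>2 + r * t + t\<^sup>2)"
    using assms \<open>0 \<le> t\<close> \<open>0 \<le> r\<close> by (intro mult_right_mono) auto
  moreover have "a * (r\<^sup>2 + r * t + t\<^sup>2) + 3 * a * (1 - r - t)
      = a * ((r - 1) ^ 2 + (r - 1) * (t - 1) + (t - 1) ^ 2)"
    by (simp add: algebra_simps power2_eq_square)
  moreover have "0 < a * ((r - 1) ^ 2 + (r - 1) * (t - 1) + (t - 1) ^ 2)"
    using assms pos by simp
  ultimately have "0 < m * (r\<^sup>2 + r * t + t\<^sup>2) + 3 * a * (1 - r - t)" by linarith
  with \<open>t < r\<close> have "0 < (r - t) * (m * (r\<^sup>2 + r * t + t\<^sup>2) + 3 * a * (1 - r - t))" by simp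
  also have "\<dots> = (m * r ^ 3 + 3 * a * r * (1 - r)) - (m * t ^ 3 + 3 * a * t * (1 - t))"
    by (simp add: algebra_simps power2_eq_square power3_eq_cube)
  finally show "m * t ^ 3 + 3 * a * t * (1 - t) < m * r ^ 3 + 3 * a * r * (1 - r)" by simp
qed

context
  fixes b1 b2 c :: real
  assumes b1_pos: "0 < b1" and b2_nonneg: "0 \<le> b2" and b2_le: "b2 \<le> b1 - 1"
  defines "c \<equiv> b2 / (2 * b1)"
begin

lemma c_nonneg: "0 \<le> c"
  using b1_pos b2_nonneg by (simp add: c_def)

lemma c_less_one: "c < 1"
  using b1_pos b2_le by (simp add: c_def field_simps)

lemma c_mult_b1: "c * b1 = b2 / 2"
  using b1_pos by (simp add: c_def)

lemma gam_eq:
  "gam (b1, b2) k t = (b1 * t ^ 3 + 3 * (1 + k * c) * t * (1 - t),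
                       b2 * t ^ 3 + 3 * (1 - k + k * c) * t * (1 - t))"
proof -
  have "b2 / b1 = 2 * c" using b1_pos by (simp add: c_def)
  then show ?thesis
    by (simp add: gam_def Ppt_def Qpt_def Let_def prod_eq_iff algebra_simps
        power2_eq_square power3_eq_cube)
qed

lemma fst_gam_diff:
  "fst (gam (b1, b2) k t) - fst (gam (b1, b2) k' t) = 3 * t * (1 - t) * c * (k - k')"
  unfolding gam_eq by (simp add: algebra_simps)

lemma snd_gam_diff:
  "snd (gam (b1, b2) k' t) - snd (gam (b1, b2) k t) = 3 * t * (1 - t) * (1 - c) * (k - k')"
  unfolding gam_eq by (simp add: algebra_simps)

lemma level_gam:
  "(1 - c) * fst (gam (b1, b2) k t) + c * snd (gam (b1, b2) k t)
     = ((1 - c) * b1 + c * b2) * t ^ 3 + 3 * t * (1 - t)"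
  unfolding gam_eq by (simp add: algebra_simps)

lemma level_gam_less_iff:
  assumes "t \<in> {0..1}" and "t' \<in> {0..1}"
  shows "(1 - c) * fst (gam (b1, b2) k t) + c * snd (gam (b1, b2) k t)
           < (1 - c) * fst (gam (b1, b2) k' t') + c * snd (gam (b1, b2) k' t') \<longleftrightarrow> t < t'"
proof -
  have "(1 - c) * b1 + c * b2 = b1 - b2 / 2 + c * b2"
    using c_mult_b1 by (simp add: algebra_simps)
  then have "1 \<le> (1 - c) * b1 + c * b2"
    using b2_nonneg b2_le mult_nonneg_nonneg[OF c_nonneg b2_nonneg] by linarith
  from strict_mono_on_less[OF strict_mono_on_cubic[OF zero_less_one this] assms]
  show ?thesis unfolding level_gam by simp
qed

lemma strict_mono_on_fst_gam:
  assumes "0 \<le> k" and "k \<le> 1"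
  shows "strict_mono_on {0..1} (\<lambda>t. fst (gam (b1, b2) k t))"
proof -
  have "k * c \<le> c * 1" using assms c_nonneg by (simp add: mult_left_le_one_le)
  also have "\<dots> \<le> c * b1" using c_nonneg b2_nonneg b2_le by (intro mult_left_mono) auto
  finally have "k * c \<le> b1 - 1" using c_mult_b1 b2_nonneg b2_le by linarith
  moreover have "0 \<le> k * c" using assms c_nonneg by simp
  ultimately show ?thesis
    unfolding gam_eq fst_conv by (intro strict_mono_on_cubic) auto
qed

lemma gam_inter_subset_endpoints:
  assumes "k \<noteq> k'"
  shows "path_image (gam (b1, b2) k) \<inter> path_image (gam (b1, b2) k') \<subseteq> {(0, 0), (b1, b2)}"
proof
  fix p assume "p \<in> path_image (gam (b1, b2) k) \<inter> path_image (gam (b1, b2) k')"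
  then obtain t t' where t: "t \<in> {0..1}" and t': "t' \<in> {0..1}"
    and p: "p = gam (b1, b2) k t" and p': "p = gam (b1, b2) k' t'"
    unfolding path_image_def by auto
  have "\<not> t < t'" "\<not> t' < t"
    using level_gam_less_iff[OF t t', of k k'] level_gam_less_iff[OF t' t, of k' k] p p'
    by simp_all
  then have "t' = t" by linarith
  then have "3 * t * (1 - t) * (1 - c) * (k - k') = 0"
    using snd_gam_diff[of k' t k] p p' by simp
  then have "t = 0 \<or> t = 1" using assms c_less_one by simp
  then show "p \<in> {(0, 0), (b1, b2)}" using p by (auto simp: gam_eq)
qed

lemma snd_gam_less_if_same_fst:
  assumes "0 \<le> k2" and "k2 \<le> 1" and "k2 < k1"
    and t1: "t1 \<in> {0<..<1}" and t2: "t2 \<in> {0<..<1}"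
    and same_x: "fst (gam (b1, b2) k1 t1) = fst (gam (b1, b2) k2 t2)"
  shows "snd (gam (b1, b2) k1 t1) < snd (gam (b1, b2) k2 t2)"
proof -
  have "0 \<le> 3 * t1 * (1 - t1) * c * (k1 - k2)"
    using t1 c_nonneg \<open>k2 < k1\<close> by simp
  then have "fst (gam (b1, b2) k2 t1) \<le> fst (gam (b1, b2) k2 t2)"
    using fst_gam_diff[of k1 t1 k2] same_x by linarith
  then have "t1 \<le> t2"
    using strict_mono_on_less_eq[OF strict_mono_on_fst_gam[OF assms(1,2)]] t1 t2 by simp
  then consider "t1 = t2" | "t1 < t2" by linarith
  then show ?thesis
  proof cases
    case 1
    have "0 < 3 * t2 * (1 - t2) * (1 - c) * (k1 - k2)"
      using t2 c_less_one \<open>k2 < k1\<close> by simp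
    then have "snd (gam (b1, b2) k1 t2) < snd (gam (b1, b2) k2 t2)"
      using snd_gam_diff[of k2 t2 k1] by linarith
    with 1 show ?thesis by simp
  next
    case 2
    then have "(1 - c) * fst (gam (b1, b2) k1 t1) + c * snd (gam (b1, b2) k1 t1)
             < (1 - c) * fst (gam (b1, b2) k2 t2) + c * snd (gam (b1, b2) k2 t2)"
      using level_gam_less_iff t1 t2 by simp
    then have "c * snd (gam (b1, b2) k1 t1) < c * snd (gam (b1, b2) k2 t2)"
      unfolding same_x by simp
    then show ?thesis using c_nonneg by (rule mult_left_less_imp_less)
  qed
qed

end

theorem lemma8:
  fixes b1 b2 k1 k2 :: real
  assumes "b1 > 0" and "0 \<le> b2" and "b2 \<le> b1 - 1"
    and "0 < k1" and "k1 < 1" and "0 < k2" and "k2 < 1" and "k1 > k2"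
  shows "path_image (gam (b1, b2) k1) \<inter> path_image (gam (b1, b2) k2) \<subseteq> {(0, 0), (b1, b2)} \<and>
         (\<forall>t1 \<in> {0<..<1}. \<forall>t2 \<in> {0<..<1}.
           fst (gam (b1, b2) k1 t1) = fst (gam (b1, b2) k2 t2) \<longrightarrow>
           snd (gam (b1, b2) k2 t2) > snd (gam (b1, b2) k1 t1))"
proof (intro conjI ballI impI)
  show "path_image (gam (b1, b2) k1) \<inter> path_image (gam (b1, b2) k2) \<subseteq> {(0, 0), (b1, b2)}"
    using gam_inter_subset_endpoints[OF assms(1-3)] \<open>k1 > k2\<close> by simp
next
  fix t1 t2 :: real
  assume "t1 \<in> {0<..<1}" "t2 \<in> {0<..<1}" "fst (gam (b1, b2) k1 t1) = fst (gam (b1, b2) k2 t2)"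
  then show "snd (gam (b1, b2) k2 t2) > snd (gam (b1, b2) k1 t1)"
    using snd_gam_less_if_same_fst[OF assms(1-3)] assms(6-8) by simp
qed

end
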